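(* Let $\alpha$ be a hinge angle with primary generating triple $(p,q,k)$. Then $$S_\alpha=\bigcup_{Q\in\{0,1,2,3\}}\{(2l+1)\,i^Q(p+qi)\ :\ l\in\mathbb N\},$$ where $\mathbb N=\{0,1,2,\dots\}$.
   Context: Identify $\mathbb Z^2$ with $\mathbb Z[i]$. Let $\mathcal H=\{w\in\mathbb C:\ \Re w\in\mathbb Z+\tfrac12\ \text{or}\ \Im w\in\mathbb Z+\tfrac12\}$. An angle $\alpha\in\mathbb R/2\pi\mathbb Z$ is a hinge angle if there exists $z\in\mathbb Z[i]$ with $ze^{i\alpha}\in\mathcal H$; its set of source points is $S_\alpha=\{z\in\mathbb Z[i]:\ e^{i\alpha}z\in\mathcal H\}$. For integers $p,q,k$ with $(k+\tfrac12)^2<p^2+q^2$, put $\lambda=\sqrt{p^2+q^2-(k+\tfrac12)^2}>0$ and let $\alpha(p,q,k)$ be the unique angle with $e^{i\alpha(p,q,k)}(p+qi)=k+\tfrac12+\lambda i$; such a triple is a generating triple of $\alpha$ if $\alpha(p,q,k)=\alpha$, and it is primary if it minimizes $p^2+q^2$ among the generating triples of $\alpha$ (it is unique). *)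

theory Defs
  imports Complex_Main
begin

definition gauss_int :: "complex \<Rightarrow> bool" where
  "gauss_int z \<longleftrightarrow> (\<exists>a b :: int. z = Complex (of_int a) (of_int b))"

definition hinge_set :: "complex set" where
  "hinge_set = {w. (\<exists>n::int. Re w = of_int n + 1/2) \<or> (\<exists>n::int. Im w = of_int n + 1/2)}"

text \<open>Angles in R/2piZ are represented by real numbers; only cis alpha matters.\<close>

definition source_points :: "real \<Rightarrow> complex set" where
  "source_points \<alpha> = {z. gauss_int z \<and> cis \<alpha> * z \<in> hinge_set}"

definition hinge_angle :: "real \<Rightarrow> bool" where
  "hinge_angle \<alpha> \<longleftrightarrow> (\<exists>z. gauss_int z \<and> cis \<alpha> * z \<in> hinge_set)"

definition triple_lambda :: "int \<Rightarrow> int \<Rightarrow> int \<Rightarrow> real" where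
  "triple_lambda p q k = sqrt (of_int (p^2 + q^2) - (of_int k + 1/2)^2)"

text \<open>(p,q,k) is admissible and alpha(p,q,k) = alpha (mod 2 pi), i.e.
  e^{i alpha}(p+qi) = k + 1/2 + lambda i.\<close>
definition generating_triple :: "real \<Rightarrow> int \<Rightarrow> int \<Rightarrow> int \<Rightarrow> bool" where
  "generating_triple \<alpha> p q k \<longleftrightarrow>
     (of_int k + 1/2)^2 < (of_int (p^2 + q^2) :: real) \<and>
     cis \<alpha> * Complex (of_int p) (of_int q) = Complex (of_int k + 1/2) (triple_lambda p q k)"

definition primary_triple :: "real \<Rightarrow> int \<Rightarrow> int \<Rightarrow> int \<Rightarrow> bool" where
  "primary_triple \<alpha> p q k \<longleftrightarrow> generating_triple \<alpha> p q k \<and>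
     (\<forall>p' q' k'. generating_triple \<alpha> p' q' k' \<longrightarrow> p^2 + q^2 \<le> p'^2 + q'^2)"

end

theory Submission
  imports Defs "HOL-Computational_Algebra.Nth_Powers"
begin

text \<open>Write \<open>w = p + q i\<close>, so that \<open>e\<^sup>i\<^sup>\<alpha> w = k + 1/2 + \<lambda> i\<close>. If a Gaussian integer \<open>z\<close>
  has \<open>Re (e\<^sup>i\<^sup>\<alpha> z) = n + 1/2\<close>, expanding \<open>|w|\<^sup>2 e\<^sup>i\<^sup>\<alpha> z = e\<^sup>i\<^sup>\<alpha> w \<cdot> z w\<^sup>*\<close> shows that
  \<open>2\<lambda> Im (z w\<^sup>*)\<close> is an integer. As \<open>(2\<lambda>)\<^sup>2 = 4|w|\<^sup>2 - (2k+1)\<^sup>2 \<equiv> 3 (mod 4)\<close> is not a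
  square, \<open>z w\<^sup>*\<close> is real and \<open>(2k+1) z = (2n+1) w\<close>. A common factor of \<open>p\<close>, \<open>q\<close> and
  \<open>2k+1\<close> would give a smaller generating triple, so \<open>2k+1\<close> divides \<open>2n+1\<close> and \<open>z\<close> is an
  odd multiple of \<open>w\<close>. The case \<open>Im (e\<^sup>i\<^sup>\<alpha> z) \<in> \<int> + 1/2\<close> reduces to this one by a
  rotation by \<open>i\<close>; conversely the hinge set is stable under multiplication by \<open>i\<close> and by
  odd integers, so all \<open>m i\<^sup>Q w\<close> with \<open>m\<close> odd are source points.\<close>

lemma square_mod_4: "(y::int)^2 mod 4 \<in> {0, 1}"
proof -
  have "y^2 mod 4 = (y mod 4)^2 mod 4" by (simp add: power_mod)
  moreover have "y mod 4 \<in> {0, 1, 2, 3}" by auto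
  ultimately show ?thesis by auto
qed

lemma not_square_if_mod_4_eq_3:
  fixes M :: int assumes "M mod 4 = 3" shows "\<not> is_square M"
proof
  assume "is_square M"
  then obtain y where "M = y^2" by (elim is_nth_powerE)
  with assms square_mod_4[of y] show False by simp
qed

lemma square_eq_mult_square_imp_zero:
  fixes t M c :: int
  assumes "t^2 = M * c^2" "M mod 4 = 3"
  shows "c = 0"
proof (rule ccontr)
  assume "c \<noteq> 0"
  have "is_square (M * c^2)" using assms(1) by (metis is_nth_powerI)
  with \<open>c \<noteq> 0\<close> have "is_square M" by (simp add: is_nth_power_mult_cancel_right)
  with not_square_if_mod_4_eq_3[OF assms(2)] show False by contradiction
qed

lemma gauss_int_iff: "gauss_int z \<longleftrightarrow> Re z \<in> \<int> \<and> Im z \<in> \<int>"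
proof
  assume "Re z \<in> \<int> \<and> Im z \<in> \<int>"
  then obtain a b where "Re z = of_int a" "Im z = of_int b" by (auto elim!: Ints_cases)
  then have "z = Complex (of_int a) (of_int b)" by (simp add: complex_eq_iff)
  then show "gauss_int z" unfolding gauss_int_def by blast
qed (auto simp: gauss_int_def)

lemma gauss_int_mult: "gauss_int x \<Longrightarrow> gauss_int y \<Longrightarrow> gauss_int (x * y)"
  by (simp add: gauss_int_iff)

lemma gauss_int_power: "gauss_int x \<Longrightarrow> gauss_int (x ^ n)"
  by (induction n) (auto simp: gauss_int_mult gauss_int_iff)

lemma i_power_mod_4: "\<i> ^ (Q mod 4) = \<i> ^ Q"
proof -
  have "\<i> ^ Q = (\<i> ^ 4) ^ (Q div 4) * \<i> ^ (Q mod 4)"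
    by (metis div_mult_mod_eq power_add power_mult mult.commute)
  then show ?thesis by simp
qed

lemma odd_multiples_eq_union:
  "{of_int m * \<i> ^ Q * w | m (Q :: nat). odd m}
    = (\<Union>Q\<in>{0,1,2,3::nat}. {of_nat (2 * l + 1) * \<i> ^ Q * w | l :: nat. True})"
  (is "?odd = ?union")
proof (intro equalityI subsetI)
  have union: "of_nat (2 * l + 1) * \<i> ^ Q * w \<in> ?union" for l Q :: nat
  proof (rule UN_I)
    show "Q mod 4 \<in> {0,1,2,3}" by auto
    show "of_nat (2 * l + 1) * \<i> ^ Q * w
        \<in> {of_nat (2 * l' + 1) * \<i> ^ (Q mod 4) * w | l' :: nat. True}"
      unfolding i_power_mod_4 by blast
  qed
  fix z assume "z \<in> ?odd"
  then obtain m and Q :: nat where "odd m" and z: "z = of_int m * \<i> ^ Q * w" by blast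
  obtain j where m: "m = 2 * j + 1" using \<open>odd m\<close> by (elim oddE)
  show "z \<in> ?union"
  proof (cases "j \<ge> 0")
    case True
    then have "of_int m = (of_nat (2 * nat j + 1) :: complex)" unfolding m by simp
    then show ?thesis unfolding z by (simp only: union)
  next
    case False
    then have "of_int m = - (of_nat (2 * nat (- j - 1) + 1) :: complex)" unfolding m by simp
    moreover have "- c * \<i> ^ Q * w = c * \<i> ^ (Q + 2) * w" for c :: complex
      by (simp add: power_add)
    ultimately show ?thesis unfolding z by (simp only: union)
  qed
next
  fix z assume "z \<in> ?union"
  then obtain l Q where z: "z = of_nat (2 * l + 1) * \<i> ^ Q * w" by blast
  have "odd (int (2 * l + 1))" by simp
  moreover have "z = of_int (int (2 * l + 1)) * \<i> ^ Q * w" unfolding z by simp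
  ultimately show "z \<in> ?odd" by blast
qed

lemma hinge_set_mult_i_iff: "\<i> * w \<in> hinge_set \<longleftrightarrow> w \<in> hinge_set"
proof -
  have "(\<exists>n::int. - Im w = n + 1/2) \<longleftrightarrow> (\<exists>n::int. Im w = n + 1/2)"
  proof
    assume "\<exists>n::int. - Im w = n + 1/2"
    then obtain n :: int where "- Im w = n + 1/2" by blast
    then have "Im w = of_int (- n - 1) + 1/2" by simp
    then show "\<exists>n::int. Im w = n + 1/2" by blast
  next
    assume "\<exists>n::int. Im w = n + 1/2"
    then obtain n :: int where "Im w = n + 1/2" by blast
    then have "- Im w = of_int (- n - 1) + 1/2" by simp
    then show "\<exists>n::int. - Im w = n + 1/2" by blast
  qed
  then show ?thesis unfolding hinge_set_def by auto
qed

lemma hinge_set_mult_odd: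
  assumes "odd m" "w \<in> hinge_set"
  shows "of_int m * w \<in> hinge_set"
proof -
  obtain j where m: "m = 2 * j + 1" using assms(1) by (elim oddE)
  have half: "\<exists>n'::int. of_int m * (of_int n + 1/2) = of_int n' + (1/2 :: real)" for n
    by (rule exI[of _ "m * n + j"]) (simp add: m algebra_simps)
  have "Re (of_int m * w) = of_int m * Re w" and "Im (of_int m * w) = of_int m * Im w"
    by simp_all
  with assms(2) half show ?thesis unfolding hinge_set_def by (smt (verit) mem_Collect_eq)
qed

lemma hinge_set_mult_i_power_iff: "\<i> ^ Q * w \<in> hinge_set \<longleftrightarrow> w \<in> hinge_set"
  by (induction Q) (simp_all add: mult.assoc hinge_set_mult_i_iff)

lemma generating_tripleD:
  assumes "generating_triple \<alpha> p q k"
  shows "cos \<alpha> * p - sin \<alpha> * q = k + 1/2"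
    and "sin \<alpha> * p + cos \<alpha> * q = triple_lambda p q k"
    and "(triple_lambda p q k)^2 = of_int (p^2 + q^2) - (k + 1/2)^2"
    and "triple_lambda p q k > 0"
    and "p^2 + q^2 > 0"
proof -
  have eq: "cis \<alpha> * Complex p q = Complex (k + 1/2) (triple_lambda p q k)"
    and lt: "(of_int k + 1/2)^2 < (of_int (p^2 + q^2) :: real)"
    using assms unfolding generating_triple_def by auto
  show "cos \<alpha> * p - sin \<alpha> * q = k + 1/2" using arg_cong[OF eq, of Re] by simp
  show "sin \<alpha> * p + cos \<alpha> * q = triple_lambda p q k" using arg_cong[OF eq, of Im] by simp
  show "(triple_lambda p q k)^2 = of_int (p^2 + q^2) - (k + 1/2)^2"
    and "triple_lambda p q k > 0"
    using lt unfolding triple_lambda_def by simp_all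
  have "(0 :: real) < of_int (p^2 + q^2)" using lt zero_le_power2 by (rule order.strict_trans1[rotated])
  then show "p^2 + q^2 > 0" by (simp only: of_int_0_less_iff)
qed

lemma triple_lambda_integral_multiple:
  assumes "generating_triple \<alpha> p q k" "2 * triple_lambda p q k * of_int c = of_int t"
  shows "c = 0"
proof (rule square_eq_mult_square_imp_zero)
  have "real_of_int (t^2) = 4 * (triple_lambda p q k)^2 * c^2"
    by (simp flip: assms(2) add: power_mult_distrib)
  also have "\<dots> = 4 * (of_int (p^2 + q^2) - (k + 1/2)^2) * c^2"
    by (simp only: generating_tripleD(3)[OF assms(1)])
  also have "\<dots> = of_int ((4 * (p^2 + q^2) - (2 * k + 1)^2) * c^2)"
    by (simp add: algebra_simps power2_eq_square)
  finally show "t^2 = (4 * (p^2 + q^2) - (2 * k + 1)^2) * c^2" by linarith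
  have "4 * (p^2 + q^2) - (2 * k + 1)^2 = 4 * (p^2 + q^2 - k^2 - k - 1) + 3"
    by (simp add: algebra_simps power2_eq_square)
  then show "(4 * (p^2 + q^2) - (2 * k + 1)^2) mod 4 = 3" by presburger
qed

lemma generating_triple_Re_half_integer:
  fixes a b n :: int
  assumes gen: "generating_triple \<alpha> p q k"
    and re: "Re (cis \<alpha> * Complex a b) = of_int n + 1/2"
  shows "(2 * k + 1) * a = (2 * n + 1) * p" and "(2 * k + 1) * b = (2 * n + 1) * q"
proof -
  define N where "N = p^2 + q^2"
  define c1 where "c1 = a * p + b * q"
  define c2 where "c2 = b * p - a * q"
  define L where "L = triple_lambda p q k"
  \<comment> \<open>\<open>c1 + c2 i = z w\<^sup>*\<close> for \<open>z = a + b i\<close>, \<open>w = p + q i\<close>; the identity below is the real part of \<open>N e\<^sup>i\<^sup>\<alpha> z = e\<^sup>i\<^sup>\<alpha> w \<cdot> z w\<^sup>*\<close>.\<close>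
  note facts = generating_tripleD[OF gen, folded L_def]
  have "N > 0" unfolding N_def by (rule facts(5))
  have "real_of_int N * (cos \<alpha> * a - sin \<alpha> * b)
      = (cos \<alpha> * p - sin \<alpha> * q) * c1 - (sin \<alpha> * p + cos \<alpha> * q) * c2"
    unfolding N_def c1_def c2_def by (simp add: algebra_simps power2_eq_square)
  then have key: "real_of_int N * (n + 1/2) = (k + 1/2) * c1 - L * c2"
    using re facts(1,2) by simp
  then have "2 * L * of_int c2 = of_int ((2 * k + 1) * c1 - N * (2 * n + 1))"
    by (simp add: algebra_simps)
  then have "c2 = 0" using triple_lambda_integral_multiple[OF gen] unfolding L_def by blast
  then have "b * p = a * q" unfolding c2_def by simp
  then have aN: "a * N = p * c1" and bN: "b * N = q * c1"
    unfolding N_def c1_def by (simp_all add: algebra_simps power2_eq_square)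
  from key \<open>c2 = 0\<close> have "real_of_int ((2 * k + 1) * c1) = of_int (N * (2 * n + 1))"
    by (simp add: algebra_simps)
  then have c1: "(2 * k + 1) * c1 = N * (2 * n + 1)" by (simp only: of_int_eq_iff)
  have "((2 * k + 1) * a) * N = ((2 * n + 1) * p) * N"
    using aN c1 by (metis mult.assoc mult.commute)
  then show "(2 * k + 1) * a = (2 * n + 1) * p" using \<open>N > 0\<close> by simp
  have "((2 * k + 1) * b) * N = ((2 * n + 1) * q) * N"
    using bN c1 by (metis mult.assoc mult.commute)
  then show "(2 * k + 1) * b = (2 * n + 1) * q" using \<open>N > 0\<close> by simp
qed

lemma generating_triple_cancel_factor:
  assumes gen: "generating_triple \<alpha> (d * p) (d * q) k"
    and k: "2 * k + 1 = d * (2 * k' + 1)" and "d > 0"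
  shows "generating_triple \<alpha> p q k'"
proof -
  have "real_of_int (2 * k + 1) = of_int (d * (2 * k' + 1))" using k by (simp only:)
  then have hk: "real_of_int k + 1/2 = of_int d * (of_int k' + 1/2)" by (simp add: algebra_simps)
  have hN: "real_of_int ((d * p)^2 + (d * q)^2) = (of_int d)^2 * of_int (p^2 + q^2)"
    by (simp add: algebra_simps)
  have hk2: "(real_of_int k + 1/2)^2 = (of_int d)^2 * (of_int k' + 1/2)^2"
    unfolding hk by (rule power_mult_distrib)
  have "(of_int d)^2 * (of_int k' + 1/2)^2 < (of_int d)^2 * (of_int (p^2 + q^2) :: real)"
    using gen unfolding generating_triple_def hk2 hN by (rule conjunct1)
  then have lt: "(of_int k' + 1/2)^2 < (of_int (p^2 + q^2) :: real)"
    using \<open>d > 0\<close> by simp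
  have "triple_lambda (d * p) (d * q) k
      = sqrt ((of_int d)^2 * (of_int (p^2 + q^2) - (of_int k' + 1/2)^2))"
    unfolding triple_lambda_def hk2 hN by (simp only: right_diff_distrib)
  also have "\<dots> = of_int d * triple_lambda p q k'"
    unfolding triple_lambda_def using \<open>d > 0\<close> by (simp add: real_sqrt_mult)
  finally have hL: "triple_lambda (d * p) (d * q) k = of_int d * triple_lambda p q k'" .
  have "of_int d * (cis \<alpha> * Complex (of_int p) (of_int q))
      = of_int d * Complex (of_int k' + 1/2) (triple_lambda p q k')"
    using gen unfolding generating_triple_def hk hL by (simp add: complex_eq_iff algebra_simps)
  then have "cis \<alpha> * Complex (of_int p) (of_int q) = Complex (of_int k' + 1/2) (triple_lambda p q k')"
    using \<open>d > 0\<close> by simp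
  with lt show ?thesis unfolding generating_triple_def by blast
qed

lemma primary_triple_common_divisor:
  assumes prim: "primary_triple \<alpha> p q k" and "d > 0"
    and "d dvd p" "d dvd q" "d dvd 2 * k + 1"
  shows "d = 1"
proof -
  obtain p' q' j where p: "p = d * p'" and q: "q = d * q'" and j: "2 * k + 1 = d * j"
    using assms(3-5) by (elim dvdE)
  have "odd (d * j)" unfolding j[symmetric] by simp
  then have "odd j" by simp
  then obtain k' where "j = 2 * k' + 1" by (elim oddE)
  with prim j \<open>d > 0\<close> have gen': "generating_triple \<alpha> p' q' k'"
    unfolding primary_triple_def p q by (blast intro: generating_triple_cancel_factor)
  then have "p^2 + q^2 \<le> p'^2 + q'^2" using prim unfolding primary_triple_def by blast
  then have "d^2 * (p'^2 + q'^2) \<le> 1 * (p'^2 + q'^2)"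
    unfolding p q by (simp add: algebra_simps)
  moreover have "p'^2 + q'^2 > 0" using gen' by (rule generating_tripleD(5))
  ultimately have "d^2 \<le> 1" by simp
  moreover have "d * 1 \<le> d * d" using \<open>d > 0\<close> by (intro mult_left_mono) auto
  ultimately show "d = 1" using \<open>d > 0\<close> unfolding power2_eq_square by linarith
qed

lemma primary_triple_odd_multiple:
  fixes a b n :: int
  assumes prim: "primary_triple \<alpha> p q k"
    and a: "(2 * k + 1) * a = (2 * n + 1) * p" and b: "(2 * k + 1) * b = (2 * n + 1) * q"
  shows "\<exists>m. odd m \<and> a = m * p \<and> b = m * q"
proof -
  \<comment> \<open>\<open>2k+1\<close> divides \<open>(2n+1) gcd(p, q, 2k+1)\<close>, and minimality makes that gcd 1.\<close>
  define g where "g = gcd (gcd p q) (2 * k + 1)"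
  have "g > 0" unfolding g_def by simp presburger
  then have "g = 1"
    unfolding g_def by (rule primary_triple_common_divisor[OF prim]) (auto intro: dvd_trans)
  have "2 * k + 1 dvd gcd (gcd ((2 * n + 1) * p) ((2 * n + 1) * q)) ((2 * n + 1) * (2 * k + 1))"
    by (metis a b dvd_triv_left dvd_triv_right gcd_greatest)
  also have "\<dots> = \<bar>2 * n + 1\<bar> * g"
    unfolding g_def by (metis abs_mult abs_gcd_int gcd_abs1_int gcd_mult_distrib_int)
  finally have "2 * k + 1 dvd 2 * n + 1" using \<open>g = 1\<close> by simp
  then obtain m where m: "2 * n + 1 = (2 * k + 1) * m" by (elim dvdE)
  have "2 * k + 1 \<noteq> 0" by presburger
  then have "a = m * p" and "b = m * q"
    using a b unfolding m by (simp_all add: mult.assoc)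
  moreover have "odd ((2 * k + 1) * m)" unfolding m[symmetric] by simp
  then have "odd m" by simp
  ultimately show ?thesis by blast
qed

lemma primary_triple_Re_half_integer:
  assumes prim: "primary_triple \<alpha> p q k" and "gauss_int z"
    and re: "Re (cis \<alpha> * z) = of_int n + 1/2"
  shows "\<exists>m. odd m \<and> z = of_int m * Complex (of_int p) (of_int q)"
proof -
  obtain a b :: int where z: "z = Complex a b" using \<open>gauss_int z\<close> unfolding gauss_int_def by blast
  have "generating_triple \<alpha> p q k" using prim unfolding primary_triple_def by blast
  from primary_triple_odd_multiple[OF prim generating_triple_Re_half_integer[OF this re[unfolded z]]]
  obtain m where "odd m" "a = m * p" "b = m * q" by blast
  then show ?thesis unfolding z by (auto simp: complex_eq_iff)
qed

lemma source_points_primary: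
  assumes prim: "primary_triple \<alpha> p q k"
  shows "source_points \<alpha> = {of_int m * \<i> ^ Q * Complex (of_int p) (of_int q) | m (Q :: nat). odd m}"
proof (intro equalityI subsetI)
  fix z assume "z \<in> source_points \<alpha>"
  then have "gauss_int z" and "cis \<alpha> * z \<in> hinge_set" unfolding source_points_def by auto
  then consider (Re) n :: int where "Re (cis \<alpha> * z) = n + 1/2"
    | (Im) n :: int where "Re (cis \<alpha> * (- \<i> * z)) = n + 1/2"
    unfolding hinge_set_def by (auto simp: add.commute)
  then show "z \<in> {of_int m * \<i> ^ Q * Complex (of_int p) (of_int q) | m (Q :: nat). odd m}"
  proof cases
    case Re
    with primary_triple_Re_half_integer[OF prim \<open>gauss_int z\<close>]
    obtain m where "odd m" "z = of_int m * \<i> ^ 0 * Complex (of_int p) (of_int q)" by auto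
    then show ?thesis by blast
  next
    case Im
    have "gauss_int (- \<i> * z)" using \<open>gauss_int z\<close> by (simp add: gauss_int_iff)
    with Im primary_triple_Re_half_integer[OF prim]
    obtain m where "odd m" and m: "- \<i> * z = of_int m * Complex (of_int p) (of_int q)" by blast
    have "z = \<i> * (- \<i> * z)" by (simp flip: mult.assoc)
    also have "\<dots> = of_int m * \<i> ^ 1 * Complex (of_int p) (of_int q)" unfolding m by simp
    finally have "z = of_int m * \<i> ^ 1 * Complex (of_int p) (of_int q)" .
    with \<open>odd m\<close> show ?thesis by blast
  qed
next
  fix z assume "z \<in> {of_int m * \<i> ^ Q * Complex (of_int p) (of_int q) | m (Q :: nat). odd m}"
  then obtain m and Q :: nat where "odd m" and z: "z = of_int m * \<i> ^ Q * Complex (of_int p) (of_int q)"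
    by blast
  have "gauss_int z"
    unfolding z by (intro gauss_int_mult gauss_int_power) (simp_all add: gauss_int_iff)
  have "cis \<alpha> * Complex (of_int p) (of_int q) = Complex (of_int k + 1/2) (triple_lambda p q k)"
    using prim unfolding primary_triple_def generating_triple_def by blast
  moreover have "Complex (of_int k + 1/2) (triple_lambda p q k) \<in> hinge_set"
    unfolding hinge_set_def by auto
  ultimately have "of_int m * (\<i> ^ Q * (cis \<alpha> * Complex (of_int p) (of_int q))) \<in> hinge_set"
    by (simp add: hinge_set_mult_odd \<open>odd m\<close> hinge_set_mult_i_power_iff)
  then have "cis \<alpha> * z \<in> hinge_set" unfolding z by (simp add: ac_simps)
  with \<open>gauss_int z\<close> show "z \<in> source_points \<alpha>" unfolding source_points_def by blast
qed

text \<open>The hypothesis \<open>hinge_angle \<alpha>\<close> is implied by the existence of a generating triple.\<close>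

theorem mainTheorem6:
  fixes \<alpha> :: real and p q k :: int
  assumes "hinge_angle \<alpha>"
    and "primary_triple \<alpha> p q k"
  shows "source_points \<alpha> =
    (\<Union>Q\<in>{0,1,2,3::nat}. {of_nat (2*l+1) * \<i>^Q * Complex (of_int p) (of_int q) | l::nat. True})"
  using source_points_primary[OF assms(2)] odd_multiples_eq_union by simp

end
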